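(* Let $(X,d)$ be an injective metric space and let $(x,y,t)\in X\times X\times[0,1]$. For every point $z\in\mathbb{E}_D[(1-t)\delta_x+t\delta_y]$ there exists a reversible conical bicombing $\sigma$ on $X$ such that $\sigma_{xy}(t)=z$. In particular, if $X$ admits only one reversible conical bicombing, then the set $\mathbb{E}_D[(1-t)\delta_x+t\delta_y]$ is a singleton.
   Context: A metric space $X$ is injective if for every metric space $B$, subset $A\subset B$ and 1-Lipschitz map $f\colon A\to X$ there is a 1-Lipschitz extension $B\to X$. For a Radon probability measure $\mu$ on $X$ with finite first moment, $W_1$ denotes the first Wasserstein distance $W_1(\mu,\nu)=\inf_\gamma\int d(x,y)\,d\gamma(x,y)$ over couplings $\gamma$ of $(\mu,\nu)$, and the Doss expectation is $\mathbb{E}_D[\mu]:=\{z\in X: d(z,w)\le W_1(\mu,\delta_w)\text{ for all }w\in X\}$. A bicombing is a map $\sigma\colon X\times X\times[0,1]\to X$ such that each $\sigma_{xy}:=\sigma(x,y,\cdot)$ is a geodesic from $x$ to $y$ ($\sigma_{xy}(0)=x$, $\sigma_{xy}(1)=y$, $d(\sigma_{xy}(s),\sigma_{xy}(t))=|s-t|d(x,y)$); it is conical if $d(\sigma_{xy}(t),\sigma_{x'y'}(t))\le(1-t)d(x,x')+t\,d(y,y')$ for all $x,y,x',y'$, $t$, and reversible if $\sigma_{xy}(t)=\sigma_{yx}(1-t)$. *)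

theory Defs
  imports "HOL-Analysis.Analysis" "HOL-Probability.Probability"
begin

text \<open>The test spaces B are
  metric spaces in the sense of the locale Metric_space whose carrier lives in the
  type 'b (we instantiate 'b with "'a set").\<close>
definition injective_wrt :: "'b itself \<Rightarrow> 'a::metric_space itself \<Rightarrow> bool" where
  "injective_wrt _ _ \<longleftrightarrow>
     (\<forall>(B::'b set) dB (A::'b set) (f::'b \<Rightarrow> 'a).
        Metric_space B dB \<and> A \<subseteq> B \<and>
        (\<forall>a\<in>A. \<forall>a'\<in>A. dist (f a) (f a') \<le> dB a a') \<longrightarrow>
        (\<exists>g::'b \<Rightarrow> 'a. (\<forall>a\<in>A. g a = f a) \<and>
                      (\<forall>b\<in>B. \<forall>b'\<in>B. dist (g b) (g b') \<le> dB b b')))"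

abbreviation injective_metric_space :: "'a::metric_space itself \<Rightarrow> bool" where
  "injective_metric_space T \<equiv> injective_wrt TYPE('a set) T"

text \<open>First Wasserstein distance between (discrete) probability measures; couplings
  of discrete measures are automatically discrete.\<close>
definition W1 :: "'a::metric_space pmf \<Rightarrow> 'a pmf \<Rightarrow> real" where
  "W1 \<mu> \<nu> = Inf {measure_pmf.expectation \<gamma> (\<lambda>(a, b). dist a b) | \<gamma>.
                    map_pmf fst \<gamma> = \<mu> \<and> map_pmf snd \<gamma> = \<nu>}"

definition doss_expectation :: "'a::metric_space pmf \<Rightarrow> 'a set" where
  "doss_expectation \<mu> = {z. \<forall>w. dist z w \<le> W1 \<mu> (return_pmf w)}"

definition two_point :: "'a \<Rightarrow> 'a \<Rightarrow> real \<Rightarrow> 'a pmf" where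
  "two_point x y t = map_pmf (\<lambda>b. if b then y else x) (bernoulli_pmf t)"

definition bicombing :: "('a::metric_space \<Rightarrow> 'a \<Rightarrow> real \<Rightarrow> 'a) \<Rightarrow> bool" where
  "bicombing \<sigma> \<longleftrightarrow> (\<forall>x y. \<sigma> x y 0 = x \<and> \<sigma> x y 1 = y \<and>
      (\<forall>s\<in>{0..1}. \<forall>t\<in>{0..1}. dist (\<sigma> x y s) (\<sigma> x y t) = \<bar>s - t\<bar> * dist x y))"

definition conical :: "('a::metric_space \<Rightarrow> 'a \<Rightarrow> real \<Rightarrow> 'a) \<Rightarrow> bool" where
  "conical \<sigma> \<longleftrightarrow> (\<forall>x y x' y'. \<forall>t\<in>{0..1}.
      dist (\<sigma> x y t) (\<sigma> x' y' t) \<le> (1 - t) * dist x x' + t * dist y y')"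

definition reversible :: "('a \<Rightarrow> 'a \<Rightarrow> real \<Rightarrow> 'a) \<Rightarrow> bool" where
  "reversible \<sigma> \<longleftrightarrow> (\<forall>x y. \<forall>t\<in>{0..1}. \<sigma> x y t = \<sigma> y x (1 - t))"

definition rc_bicombing :: "('a::metric_space \<Rightarrow> 'a \<Rightarrow> real \<Rightarrow> 'a) \<Rightarrow> bool" where
  "rc_bicombing \<sigma> \<longleftrightarrow> bicombing \<sigma> \<and> conical \<sigma> \<and> reversible \<sigma>"

end

theory Submission
  imports Defs
begin

(* A triple (u, v, s) stands for the formal convex combination (1 - s) u + s v and is
   represented by the function w \<mapsto> (1 - s) d(w, u) + s d(w, v). The sup-distance of these
   functions is a pseudometric on X \<times> X \<times> \<real> that identifies (u, v, s) with (v, u, 1 - s),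
   satisfies the conical inequality and gives distance at most |s - s'| d(u, v) between
   (u, v, s) and (u, v, s'). The map (u, v, 0) \<mapsto> u, (u, v, 1) \<mapsto> v, (x, y, t) \<mapsto> z is
   1-Lipschitz for it precisely because d(z, w) \<le> (1 - t) d(x, w) + t d(y, w) for all w, i.e.
   because z lies in the Doss expectation. Injectivity extends it to all triples, and any
   1-Lipschitz extension is a reversible conical bicombing through z. Conversely, comparing
   with the constant geodesic at w shows that every conical bicombing takes its value at
   (x, y, t) in the Doss expectation, which gives the singleton statement. *)

lemma W1_return_pmf:
  "W1 \<mu> (return_pmf w) = measure_pmf.expectation \<mu> (\<lambda>a. dist a w)"
proof -
  have "{\<gamma>. map_pmf fst \<gamma> = \<mu> \<and> map_pmf snd \<gamma> = return_pmf w} = {map_pmf (\<lambda>a. (a, w)) \<mu>}"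
  proof (intro equalityI subsetI)
    fix \<gamma> assume "\<gamma> \<in> {\<gamma>. map_pmf fst \<gamma> = \<mu> \<and> map_pmf snd \<gamma> = return_pmf w}"
    then have fst: "map_pmf fst \<gamma> = \<mu>" and snd: "map_pmf snd \<gamma> = return_pmf w" by auto
    have "\<forall>p\<in>set_pmf \<gamma>. snd p = w"
      using arg_cong[OF snd, of set_pmf] by auto
    then have "\<gamma> = map_pmf (\<lambda>p. (fst p, w)) \<gamma>"
      by (metis (mono_tags, lifting) map_pmf_cong map_pmf_ident prod.collapse)
    also have "\<dots> = map_pmf (\<lambda>a. (a, w)) \<mu>"
      by (simp add: fst[symmetric] map_pmf_comp)
    finally show "\<gamma> \<in> {map_pmf (\<lambda>a. (a, w)) \<mu>}" by simp
  qed (simp add: map_pmf_comp)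
  then show ?thesis
    unfolding W1_def by (simp add: setcompr_eq_image)
qed

lemma expectation_two_point:
  assumes "t \<in> {0..1}"
  shows "measure_pmf.expectation (two_point x y t) f = (1 - t) * f x + t * f y"
  using assms by (simp add: two_point_def)

lemma doss_expectation_two_point:
  assumes "t \<in> {0..1}"
  shows "doss_expectation (two_point x y t) = {z. \<forall>w. dist z w \<le> (1 - t) * dist x w + t * dist y w}"
  unfolding doss_expectation_def W1_return_pmf expectation_two_point[OF assms] ..

lemma injective_metric_spaceE:
  fixes f :: "'b set \<Rightarrow> 'b::metric_space"
  assumes "injective_metric_space TYPE('b)" and "Metric_space B dB" and "A \<subseteq> B"
    and "\<forall>a\<in>A. \<forall>a'\<in>A. dist (f a) (f a') \<le> dB a a'"
  obtains g where "\<forall>a\<in>A. g a = f a" and "\<forall>b\<in>B. \<forall>b'\<in>B. dist (g b) (g b') \<le> dB b b'"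
proof -
  have "\<exists>g. (\<forall>a\<in>A. g a = f a) \<and> (\<forall>b\<in>B. \<forall>b'\<in>B. dist (g b) (g b') \<le> dB b b')"
    using assms unfolding injective_wrt_def by simp
  then show thesis using that by blast
qed

lemma injective_metric_space_midpoint:
  fixes p q :: "'a::metric_space"
  assumes inj: "injective_metric_space TYPE('a)"
  obtains m where "dist p m = dist p q / 2" and "dist m q = dist p q / 2"
proof (cases "p = q")
  case True
  then show thesis by (intro that[of p]) simp_all
next
  case False
  define \<delta> where "\<delta> = dist p q"
  have "\<delta> > 0" using False by (simp add: \<delta>_def)
  define dB :: "'a set \<Rightarrow> 'a set \<Rightarrow> real" where
    "dB S S' = (if S = S' then 0 else if S = {} \<or> S' = {} then \<delta> / 2 else \<delta>)" for S S'
  have ms: "Metric_space {{}, {p}, {q}} dB"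
  proof
    fix S S' S'' :: "'a set"
    show "dB S S'' \<le> dB S S' + dB S' S''"
      using \<open>\<delta> > 0\<close> by (auto simp: dB_def)
  qed (use \<open>\<delta> > 0\<close> in \<open>auto simp: dB_def\<close>)
  have "\<forall>S\<in>{{p}, {q}}. \<forall>S'\<in>{{p}, {q}}. dist (the_elem S) (the_elem S') \<le> dB S S'"
    using False by (auto simp: dB_def \<delta>_def dist_commute)
  then obtain g :: "'a set \<Rightarrow> 'a" where "\<forall>S\<in>{{p}, {q}}. g S = the_elem S"
    and "\<forall>S\<in>{{}, {p}, {q}}. \<forall>S'\<in>{{}, {p}, {q}}. dist (g S) (g S') \<le> dB S S'"
    using injective_metric_spaceE[OF inj ms] by blast
  then have "dist p (g {}) \<le> \<delta> / 2" "dist (g {}) q \<le> \<delta> / 2"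
    by (force simp: dB_def)+
  moreover have "\<delta> \<le> dist p (g {}) + dist (g {}) q"
    unfolding \<delta>_def by (rule dist_triangle)
  ultimately show thesis
    by (intro that[of "g {}"]) (simp_all add: \<delta>_def)
qed

lemma injective_metric_space_infinite:
  fixes p q :: "'a::metric_space"
  assumes inj: "injective_metric_space TYPE('a)" and "p \<noteq> q"
  shows "infinite (UNIV :: 'a set)"
proof
  assume fin: "finite (UNIV :: 'a set)"
  define Ds where "Ds = (\<lambda>(a, b). dist a b) ` {(a :: 'a, b). a \<noteq> b}"
  have Ds_iff: "r \<in> Ds \<longleftrightarrow> (\<exists>a b :: 'a. a \<noteq> b \<and> r = dist a b)" for r
    unfolding Ds_def by force
  have "finite {(a :: 'a, b). a \<noteq> b}"
    using finite_Prod_UNIV[OF fin fin] by (rule finite_subset[rotated]) simp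
  then have "finite Ds"
    unfolding Ds_def by (rule finite_imageI)
  moreover have "dist p q \<in> Ds" using \<open>p \<noteq> q\<close> Ds_iff by blast
  ultimately have Min_le_Ds: "\<And>r. r \<in> Ds \<Longrightarrow> Min Ds \<le> r" and "Min Ds \<in> Ds"
    by (auto intro: Min_in)
  then obtain a b :: 'a where "a \<noteq> b" and ab: "Min Ds = dist a b"
    using Ds_iff by blast
  obtain m where m: "dist a m = dist a b / 2"
    using injective_metric_space_midpoint[OF inj] by blast
  with \<open>a \<noteq> b\<close> have "a \<noteq> m" by auto
  then have "Min Ds \<le> dist a m" by (intro Min_le_Ds) (use Ds_iff in blast)
  then show False using m ab \<open>a \<noteq> b\<close> by simp
qed

lemma pseudometric_quotient_embedding:
  fixes D :: "'p \<Rightarrow> 'p \<Rightarrow> real" and c :: "'p \<Rightarrow> 's"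
  assumes "inj c"
    and D_self: "\<And>b. D b b = 0"
    and D_commute: "\<And>b b'. D b b' = D b' b"
    and D_triangle: "\<And>b b' b''. D b b'' \<le> D b b' + D b' b''"
  obtains e :: "'p \<Rightarrow> 's" and d :: "'s \<Rightarrow> 's \<Rightarrow> real"
  where "Metric_space (range e) d" and "\<And>b b'. d (e b) (e b') = D b b'"
proof -
  define rep where "rep b = (SOME b'. D b b' = 0)" for b
  have D_rep: "D b (rep b) = 0" for b
    unfolding rep_def by (rule someI[of _ b]) (rule D_self)
  have D_cong: "D b e = D b' e" if "D b b' = 0" for b b' e
    using that D_triangle[of b e b'] D_triangle[of b' e b] D_commute[of b b'] by linarith
  have D_rep_rep: "D (rep b) (rep b') = D b b'" for b b'
  proof -
    have "D (rep b) (rep b') = D b (rep b')"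
      using D_cong[OF D_rep[of b]] D_commute by metis
    also have "\<dots> = D b b'"
      using D_cong[OF D_rep[of b'], of b] D_commute by metis
    finally show ?thesis .
  qed
  have rep_eq_iff: "rep b = rep b' \<longleftrightarrow> D b b' = 0" for b b'
  proof
    assume "rep b = rep b'"
    then show "D b b' = 0" using D_rep_rep[of b b'] D_self by simp
  next
    assume "D b b' = 0"
    then show "rep b = rep b'" unfolding rep_def using D_cong[of b b'] by simp
  qed
  define d where "d S S' = D (inv c S) (inv c S')" for S S'
  have d_rep: "d (c (rep b)) (c (rep b')) = D b b'" for b b'
    using \<open>inj c\<close> by (simp add: d_def D_rep_rep)
  have D_nonneg: "0 \<le> D b b'" for b b'
    using D_triangle[of b b b'] D_self[of b] D_commute[of b b'] by linarith
  have "Metric_space (range (c \<circ> rep)) d"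
  proof
    show "d S S'' \<le> d S S' + d S' S''" for S S' S''
      by (simp add: d_def D_triangle)
  next
    fix S S' assume "S \<in> range (c \<circ> rep)" "S' \<in> range (c \<circ> rep)"
    then obtain b b' where "S = c (rep b)" "S' = c (rep b')" by auto
    then show "d S S' = 0 \<longleftrightarrow> S = S'"
      using rep_eq_iff[of b b'] by (simp add: d_rep inj_eq[OF \<open>inj c\<close>])
  qed (simp_all add: d_def D_nonneg D_commute)
  then show thesis
    using that[of "c \<circ> rep" d] d_rep by simp
qed

(* Test spaces for injectivity are subsets of 'a set (see injective_wrt), hence the coding c. *)
lemma injective_extension_pseudometric:
  fixes D :: "'p \<Rightarrow> 'p \<Rightarrow> real" and c :: "'p \<Rightarrow> 'a::metric_space set" and f :: "'p \<Rightarrow> 'a"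
  assumes inj: "injective_metric_space TYPE('a)" and "inj c"
    and "\<And>b. D b b = 0" and "\<And>b b'. D b b' = D b' b"
    and "\<And>b b' b''. D b b'' \<le> D b b' + D b' b''"
    and lip: "\<And>a a'. a \<in> A \<Longrightarrow> a' \<in> A \<Longrightarrow> dist (f a) (f a') \<le> D a a'"
  obtains g where "\<And>a. a \<in> A \<Longrightarrow> g a = f a" and "\<And>b b'. dist (g b) (g b') \<le> D b b'"
proof -
  obtain e :: "'p \<Rightarrow> 'a set" and d where ms: "Metric_space (range e) d"
    and d: "\<And>b b'. d (e b) (e b') = D b b'"
    using pseudometric_quotient_embedding assms(2-5) by metis
  define pick where "pick S = (SOME a. a \<in> A \<and> e a = S)" for S
  have f_pick: "f (pick (e a)) = f a" if "a \<in> A" for a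
  proof -
    have pick: "pick (e a) \<in> A \<and> e (pick (e a)) = e a"
      unfolding pick_def by (rule someI[of _ a]) (use that in simp)
    then have "d (e (pick (e a))) (e a) = 0"
      using Metric_space.zero[OF ms] by simp
    then have "D (pick (e a)) a = 0"
      by (simp only: d)
    then show ?thesis using lip[of "pick (e a)" a] pick that by simp
  qed
  have pick_lip: "\<forall>S\<in>e ` A. \<forall>S'\<in>e ` A. dist (f (pick S)) (f (pick S')) \<le> d S S'"
  proof (intro ballI)
    fix S S' assume "S \<in> e ` A" "S' \<in> e ` A"
    then obtain a a' where "a \<in> A" "a' \<in> A" "S = e a" "S' = e a'" by blast
    then show "dist (f (pick S)) (f (pick S')) \<le> d S S'"
      using lip[of a a'] by (simp add: f_pick d)
  qed
  obtain h :: "'a set \<Rightarrow> 'a" where h_ext: "\<forall>S\<in>e ` A. h S = f (pick S)"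
    and h_lip: "\<forall>S\<in>range e. \<forall>S'\<in>range e. dist (h S) (h S') \<le> d S S'"
    using injective_metric_spaceE[OF inj ms _ pick_lip] by blast
  show thesis
  proof (rule that[of "h \<circ> e"])
    show "(h \<circ> e) a = f a" if "a \<in> A" for a
      using h_ext that f_pick by simp
    show "dist ((h \<circ> e) b) ((h \<circ> e) b') \<le> D b b'" for b b'
      using h_lip[rule_format, of "e b" "e b'"] by (simp add: d)
  qed
qed

lemma infinite_imp_inj_prod_countable:
  assumes "infinite (UNIV :: 'a set)"
  obtains Q :: "'a \<times> 'a \<times> 'c::countable \<Rightarrow> 'a" where "inj Q"
proof -
  obtain P :: "'a \<times> 'a \<Rightarrow> 'a" where "bij_betw P (UNIV \<times> UNIV) UNIV"
    using card_of_Times_same_infinite[OF assms] card_of_ordIso by blast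
  then have P: "inj P" by (simp add: bij_betw_def)
  obtain e :: "nat \<Rightarrow> 'a" where e: "inj e"
    using infinite_countable_subset[OF assms] by blast
  have "inj (\<lambda>(u, v, r::'c). P (P (u, v), e (to_nat r)))"
    by (rule injI, clarify) (simp add: inj_eq[OF P] inj_eq[OF e] inj_eq[OF inj_to_nat])
  then show thesis by (rule that)
qed

lemma inj_rat_cut: "inj (\<lambda>s::real. {r::rat. of_rat r < s})"
proof (rule injI)
  have "{r::rat. of_rat r < s} \<noteq> {r. of_rat r < s'}" if lt: "s < s'" for s s' :: real
  proof -
    obtain q where "s < of_rat q" "of_rat q < s'"
      using of_rat_dense[OF lt] by blast
    then have "q \<in> {r. of_rat r < s'}" "q \<notin> {r. of_rat r < s}" by auto
    then show ?thesis by blast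
  qed
  then show "s = s'" if "{r::rat. of_rat r < s} = {r. of_rat r < s'}" for s s' :: real
    using that by (metis linorder_neq_iff)
qed

lemma infinite_imp_inj_triple_Pow:
  assumes "infinite (UNIV :: 'a set)"
  obtains c :: "'a \<times> 'a \<times> real \<Rightarrow> 'a set" where "inj c"
proof -
  obtain Q :: "'a \<times> 'a \<times> rat \<Rightarrow> 'a" where Q: "inj Q"
    using infinite_imp_inj_prod_countable[OF assms] by blast
  define c where "c = (\<lambda>(u, v, s::real). (\<lambda>r. Q (u, v, r)) ` {r. of_rat r < s})"
  have "inj c"
  proof (rule injI)
    fix b b' :: "'a \<times> 'a \<times> real" assume eq: "c b = c b'"
    obtain u v s u' v' s' where b: "b = (u, v, s)" and b': "b' = (u', v', s')"
      by (metis prod_cases3)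
    obtain r :: rat where "of_rat r < s"
      using of_rat_dense[of "s - 1" s] by auto
    then have "Q (u, v, r) \<in> c b'" using eq by (auto simp: c_def b)
    then obtain r' where "Q (u, v, r) = Q (u', v', r')" by (auto simp: c_def b')
    then have uv: "u = u'" "v = v'" by (simp_all add: inj_eq[OF Q])
    have "inj (\<lambda>r. Q (u, v, r))" by (rule injI) (simp add: inj_eq[OF Q])
    then have "{r. of_rat r < s} = {r. of_rat r < s'}"
      using eq by (simp add: c_def b b' uv inj_image_eq_iff)
    then have "s = s'" using injD[OF inj_rat_cut] by blast
    then show "b = b'" using b b' uv by simp
  qed
  then show thesis by (rule that)
qed

definition mix_dist :: "'a::metric_space \<Rightarrow> 'a \<times> 'a \<times> real \<Rightarrow> real" where
  "mix_dist w = (\<lambda>(u, v, s). (1 - s) * dist w u + s * dist w v)"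

(* The functions mix_dist _ b are unbounded, but their differences are bounded. *)
definition mix_pdist :: "'a::metric_space \<times> 'a \<times> real \<Rightarrow> 'a \<times> 'a \<times> real \<Rightarrow> real" where
  "mix_pdist b b' = (SUP w. \<bar>mix_dist w b - mix_dist w b'\<bar>)"

lemma mix_dist_diff_param:
  "\<bar>mix_dist w (u, v, s) - mix_dist w (u, v, s')\<bar> \<le> \<bar>s - s'\<bar> * dist u v"
proof -
  have "\<bar>mix_dist w (u, v, s) - mix_dist w (u, v, s')\<bar> = \<bar>s - s'\<bar> * \<bar>dist v w - dist w u\<bar>"
    by (simp add: mix_dist_def dist_commute abs_mult[symmetric] algebra_simps)
  also have "\<dots> \<le> \<bar>s - s'\<bar> * dist v u"
    by (intro mult_left_mono abs_dist_diff_le) simp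
  finally show ?thesis by (simp add: dist_commute)
qed

lemma mix_dist_diff_ends:
  "\<bar>mix_dist w (u, v, s) - mix_dist w (u', v', s)\<bar> \<le> \<bar>1 - s\<bar> * dist u u' + \<bar>s\<bar> * dist v v'"
proof -
  have "\<bar>mix_dist w (u, v, s) - mix_dist w (u', v', s)\<bar>
      = \<bar>(1 - s) * (dist u w - dist w u') + s * (dist v w - dist w v')\<bar>"
    by (simp add: mix_dist_def dist_commute algebra_simps)
  also have "\<dots> \<le> \<bar>1 - s\<bar> * \<bar>dist u w - dist w u'\<bar> + \<bar>s\<bar> * \<bar>dist v w - dist w v'\<bar>"
    by (metis abs_mult abs_triangle_ineq)
  also have "\<dots> \<le> \<bar>1 - s\<bar> * dist u u' + \<bar>s\<bar> * dist v v'"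
    by (intro add_mono mult_left_mono abs_dist_diff_le) simp_all
  finally show ?thesis .
qed

lemma bdd_above_mix_dist_diff: "bdd_above (range (\<lambda>w. \<bar>mix_dist w b - mix_dist w b'\<bar>))"
proof -
  obtain u v s u' v' s' where b: "b = (u, v, s)" and b': "b' = (u', v', s')"
    by (metis prod_cases3)
  have "\<bar>mix_dist w b - mix_dist w b'\<bar>
      \<le> \<bar>s - s'\<bar> * dist u v + (\<bar>1 - s'\<bar> * dist u u' + \<bar>s'\<bar> * dist v v')" for w
    unfolding b b' using mix_dist_diff_param[of w u v s s'] mix_dist_diff_ends[of w u v s' u' v']
    by linarith
  then show ?thesis by (intro bdd_aboveI2)
qed

lemma mix_dist_diff_le_mix_pdist: "\<bar>mix_dist w b - mix_dist w b'\<bar> \<le> mix_pdist b b'"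
  unfolding mix_pdist_def by (rule cSUP_upper[OF _ bdd_above_mix_dist_diff]) simp

lemma mix_pdist_le: "(\<And>w. \<bar>mix_dist w b - mix_dist w b'\<bar> \<le> r) \<Longrightarrow> mix_pdist b b' \<le> r"
  unfolding mix_pdist_def by (rule cSUP_least) auto

lemma mix_pdist_nonneg: "0 \<le> mix_pdist b b'"
  using mix_dist_diff_le_mix_pdist[of undefined b b'] by linarith

lemma mix_pdist_self: "mix_pdist b b = 0"
  using mix_pdist_le[of b b 0] mix_pdist_nonneg[of b b] by simp

lemma mix_pdist_commute: "mix_pdist b b' = mix_pdist b' b"
  unfolding mix_pdist_def by (simp add: abs_minus_commute)

lemma mix_pdist_triangle: "mix_pdist b b'' \<le> mix_pdist b b' + mix_pdist b' b''"
proof (rule mix_pdist_le)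
  fix w
  have "\<bar>mix_dist w b - mix_dist w b''\<bar> \<le> \<bar>mix_dist w b - mix_dist w b'\<bar> + \<bar>mix_dist w b' - mix_dist w b''\<bar>"
    by linarith
  also have "\<dots> \<le> mix_pdist b b' + mix_pdist b' b''"
    by (intro add_mono mix_dist_diff_le_mix_pdist)
  finally show "\<bar>mix_dist w b - mix_dist w b''\<bar> \<le> mix_pdist b b' + mix_pdist b' b''" .
qed

lemma mix_pdist_param: "mix_pdist (u, v, s) (u, v, s') \<le> \<bar>s - s'\<bar> * dist u v"
  by (intro mix_pdist_le mix_dist_diff_param)

lemma mix_pdist_ends:
  assumes "s \<in> {0..1}"
  shows "mix_pdist (u, v, s) (u', v', s) \<le> (1 - s) * dist u u' + s * dist v v'"
  using assms mix_dist_diff_ends[of _ u v s u' v'] by (intro mix_pdist_le) simp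

lemma mix_pdist_swap: "mix_pdist (u, v, s) (v, u, 1 - s) = 0"
proof -
  have "mix_pdist (u, v, s) (v, u, 1 - s) \<le> 0"
    by (rule mix_pdist_le) (simp add: mix_dist_def algebra_simps)
  then show ?thesis using mix_pdist_nonneg by (rule antisym)
qed

lemma dist_le_mix_pdist:
  assumes "\<And>w. dist w q \<le> mix_dist w b'" and "mix_dist p b = 0"
  shows "dist p q \<le> mix_pdist b b'"
proof -
  have "dist p q \<le> \<bar>mix_dist p b - mix_dist p b'\<bar>"
    using assms(1)[of p] assms(2) by simp
  also have "\<dots> \<le> mix_pdist b b'"
    by (rule mix_dist_diff_le_mix_pdist)
  finally show ?thesis .
qed

lemma dist_eq_if_Lipschitz_path:
  fixes \<gamma> :: "real \<Rightarrow> 'a::metric_space"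
  assumes "\<gamma> 0 = u" and "\<gamma> 1 = v"
    and lip: "\<And>s s'. dist (\<gamma> s) (\<gamma> s') \<le> \<bar>s - s'\<bar> * dist u v"
    and "s \<in> {0..1}" and "s' \<in> {0..1}"
  shows "dist (\<gamma> s) (\<gamma> s') = \<bar>s - s'\<bar> * dist u v"
proof -
  have lower: "(s' - s) * dist u v \<le> dist (\<gamma> s) (\<gamma> s')" if "0 \<le> s" "s \<le> s'" "s' \<le> 1" for s s'
  proof -
    have "dist u v \<le> dist u (\<gamma> s) + dist (\<gamma> s) (\<gamma> s') + dist (\<gamma> s') v"
      using dist_triangle[of u v "\<gamma> s"] dist_triangle[of "\<gamma> s" v "\<gamma> s'"] by linarith
    moreover have "dist u (\<gamma> s) \<le> s * dist u v" "dist (\<gamma> s') v \<le> (1 - s') * dist u v"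
      using lip[of 0 s] lip[of s' 1] assms(1,2) that by simp_all
    ultimately show ?thesis by (simp add: algebra_simps)
  qed
  show ?thesis
  proof (cases "s \<le> s'")
    case True
    then have "(s' - s) * dist u v \<le> dist (\<gamma> s) (\<gamma> s')"
      using lower assms(4,5) by simp
    moreover have "\<bar>s - s'\<bar> = s' - s" using True by simp
    ultimately show ?thesis using lip[of s s'] by (metis antisym)
  next
    case False
    then have "(s - s') * dist u v \<le> dist (\<gamma> s) (\<gamma> s')"
      using lower[of s' s] assms(4,5) by (simp add: dist_commute)
    moreover have "\<bar>s - s'\<bar> = s - s'" using False by simp
    ultimately show ?thesis using lip[of s s'] by (metis antisym)
  qed
qed

lemma rc_bicombing_if_Lipschitz_mix_pdist:
  assumes lip: "\<And>b b'. dist (g b) (g b') \<le> mix_pdist b b'"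
    and g0: "\<And>u v. g (u, v, 0) = u" and g1: "\<And>u v. g (u, v, 1) = v"
  shows "rc_bicombing (\<lambda>u v s. g (u, v, s))"
proof -
  have geodesic: "dist (g (u, v, s)) (g (u, v, s')) = \<bar>s - s'\<bar> * dist u v"
    if "s \<in> {0..1}" "s' \<in> {0..1}" for u v s s'
    by (rule dist_eq_if_Lipschitz_path[where \<gamma> = "\<lambda>s. g (u, v, s)", OF g0 g1 _ that])
      (rule order_trans[OF lip mix_pdist_param])
  have conical: "dist (g (u, v, s)) (g (u', v', s)) \<le> (1 - s) * dist u u' + s * dist v v'"
    if "s \<in> {0..1}" for u v u' v' s
    by (rule order_trans[OF lip mix_pdist_ends[OF that]])
  have reversible: "g (u, v, s) = g (v, u, 1 - s)" for u v s
    using lip[of "(u, v, s)" "(v, u, 1 - s)"] by (simp add: mix_pdist_swap)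
  show ?thesis
    unfolding rc_bicombing_def bicombing_def conical_def reversible_def
    using g0 g1 geodesic conical reversible by blast
qed

lemma bicombingD:
  assumes "bicombing \<sigma>"
  shows "\<sigma> x y 0 = x" and "\<sigma> x y 1 = y"
    and "s \<in> {0..1} \<Longrightarrow> s' \<in> {0..1} \<Longrightarrow> dist (\<sigma> x y s) (\<sigma> x y s') = \<bar>s - s'\<bar> * dist x y"
  using assms unfolding bicombing_def by blast+

lemma conicalD:
  "conical \<sigma> \<Longrightarrow> t \<in> {0..1} \<Longrightarrow> dist (\<sigma> x y t) (\<sigma> x' y' t) \<le> (1 - t) * dist x x' + t * dist y y'"
  unfolding conical_def by blast

lemma bicombing_self:
  assumes "bicombing \<sigma>" and "t \<in> {0..1}"
  shows "\<sigma> w w t = w"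
  using bicombingD(3)[OF assms, of 0 w w] bicombingD(1)[OF assms(1), of w w] by simp

lemma conical_bicombing_in_doss_expectation:
  fixes x y :: "'a::metric_space"
  assumes "bicombing \<sigma>" and "conical \<sigma>" and t: "t \<in> {0..1}"
  shows "\<sigma> x y t \<in> doss_expectation (two_point x y t)"
proof -
  have "dist (\<sigma> x y t) w \<le> (1 - t) * dist x w + t * dist y w" for w
    using conicalD[OF \<open>conical \<sigma>\<close> t, of x y w w] bicombing_self[OF \<open>bicombing \<sigma>\<close> t, of w]
    by simp
  then show ?thesis by (simp add: doss_expectation_two_point[OF t])
qed

lemma rc_bicombing_through_doss_point:
  fixes x y z :: "'a::metric_space"
  assumes inj: "injective_metric_space TYPE('a)"
    and doss: "\<And>w. dist z w \<le> (1 - t) * dist x w + t * dist y w"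
  shows "\<exists>\<sigma>. rc_bicombing \<sigma> \<and> \<sigma> x y t = z"
proof (cases "\<exists>p q :: 'a. p \<noteq> q")
  case False
  have lip: "dist (fst b) (fst b') \<le> mix_pdist b b'" for b b' :: "'a \<times> 'a \<times> real"
  proof -
    have "fst b = fst b'" using False by blast
    then show ?thesis using mix_pdist_nonneg[of b b'] by simp
  qed
  have fst_end: "fst (u, v, 1 :: real) = v" for u v :: 'a
    using False by auto
  have "rc_bicombing (\<lambda>u v :: 'a. \<lambda>s. fst (u, v, s))"
    by (rule rc_bicombing_if_Lipschitz_mix_pdist[OF lip _ fst_end]) simp
  then show ?thesis
    using False by (intro exI[of _ "\<lambda>u v s. u"]) auto
next
  case True
  then obtain c :: "'a \<times> 'a \<times> real \<Rightarrow> 'a set" where "inj c"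
    using injective_metric_space_infinite[OF inj] infinite_imp_inj_triple_Pow by metis
  define A where "A = insert (x, y, t) {(u, v, s). s = 0 \<or> s = 1}"
  define F where "F b = (if b = (x, y, t) then z else case b of (u, v, s) \<Rightarrow> if s = 0 then u else v)"
    for b :: "'a \<times> 'a \<times> real"
  have F_dominated: "dist w (F b) \<le> mix_dist w b" if "b \<in> A" for w b
    using that doss[of w] by (auto simp: A_def F_def mix_dist_def dist_commute)
  have F_vanishes: "mix_dist (F b) b = 0" if "b \<in> A" "b \<noteq> (x, y, t)" for b
    using that by (auto simp: A_def F_def mix_dist_def)
  have "dist (F a) (F a') \<le> mix_pdist a a'" if "a \<in> A" "a' \<in> A" for a a'
  proof (cases "a = (x, y, t)")
    case False
    then show ?thesis using that by (intro dist_le_mix_pdist F_dominated F_vanishes)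
  next
    case True
    then show ?thesis using that
      by (cases "a' = a") (auto simp: mix_pdist_self dist_commute mix_pdist_commute
          intro!: dist_le_mix_pdist F_dominated F_vanishes)
  qed
  then obtain g where g_F: "\<And>b. b \<in> A \<Longrightarrow> g b = F b"
    and g_lip: "\<And>b b'. dist (g b) (g b') \<le> mix_pdist b b'"
    by (rule injective_extension_pseudometric[OF inj \<open>inj c\<close> mix_pdist_self mix_pdist_commute
          mix_pdist_triangle]) blast+
  have "g (u, v, 0) = u" "g (u, v, 1) = v" for u v
    using g_F doss[of x] doss[of y] by (auto simp: A_def F_def)
  then have "rc_bicombing (\<lambda>u v s. g (u, v, s))"
    by (intro rc_bicombing_if_Lipschitz_mix_pdist g_lip)
  moreover have "g (x, y, t) = z" by (simp add: g_F A_def F_def)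
  ultimately show ?thesis by auto
qed

theorem lemma3p4:
  fixes x y :: "'a::metric_space" and t :: real
  assumes inj: "injective_metric_space TYPE('a)"
    and t: "t \<in> {0..1}"
  shows "(\<forall>z \<in> doss_expectation (two_point x y t).
            \<exists>\<sigma>. rc_bicombing \<sigma> \<and> \<sigma> x y t = z)
     \<and> (((\<exists>\<sigma>::'a \<Rightarrow> 'a \<Rightarrow> real \<Rightarrow> 'a. rc_bicombing \<sigma>) \<and>
          (\<forall>\<sigma> \<sigma>'::'a \<Rightarrow> 'a \<Rightarrow> real \<Rightarrow> 'a. rc_bicombing \<sigma> \<longrightarrow> rc_bicombing (\<sigma>'::'a \<Rightarrow> 'a \<Rightarrow> real \<Rightarrow> 'a) \<longrightarrow>
             (\<forall>p q. \<forall>s\<in>{0..1}. \<sigma> p q s = \<sigma>' p q s)))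
        \<longrightarrow> (\<exists>z. doss_expectation (two_point x y t) = {z}))"
proof (intro conjI impI)
  show realized: "\<forall>z \<in> doss_expectation (two_point x y t). \<exists>\<sigma>. rc_bicombing \<sigma> \<and> \<sigma> x y t = z"
    by (intro ballI rc_bicombing_through_doss_point[OF inj]) (simp add: doss_expectation_two_point[OF t])
  assume "(\<exists>\<sigma>::'a \<Rightarrow> 'a \<Rightarrow> real \<Rightarrow> 'a. rc_bicombing \<sigma>) \<and>
          (\<forall>\<sigma> \<sigma>'::'a \<Rightarrow> 'a \<Rightarrow> real \<Rightarrow> 'a. rc_bicombing \<sigma> \<longrightarrow> rc_bicombing \<sigma>' \<longrightarrow>
             (\<forall>p q. \<forall>s\<in>{0..1}. \<sigma> p q s = \<sigma>' p q s))"
  then obtain \<sigma> where \<sigma>: "rc_bicombing \<sigma>"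
    and unique: "\<And>\<sigma>'. rc_bicombing \<sigma>' \<Longrightarrow> \<sigma>' x y t = \<sigma> x y t"
    using t by blast
  have "\<sigma> x y t \<in> doss_expectation (two_point x y t)"
    using \<sigma> t by (intro conical_bicombing_in_doss_expectation) (auto simp: rc_bicombing_def)
  moreover have "z = \<sigma> x y t" if z: "z \<in> doss_expectation (two_point x y t)" for z
  proof -
    obtain \<sigma>' where "rc_bicombing \<sigma>'" and "\<sigma>' x y t = z"
      using bspec[OF realized z] by (elim exE conjE)
    then show ?thesis using unique[of \<sigma>'] by simp
  qed
  ultimately have "doss_expectation (two_point x y t) = {\<sigma> x y t}"
    by blast
  then show "\<exists>z. doss_expectation (two_point x y t) = {z}" ..
qed

end
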